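(* Let $\mathcal{H}=\bigotimes_{i=1}^n\mathcal{H}_i$ with $\dim\mathcal{H}_i=d_i$, and let $U$ be a unitary gate on $\mathcal{H}$. Then the entangling power with respect to the $n$-party one-tangle equals $$\epsilon_1(U)=\frac{1}{2^{n-1}-1}\sum_{p|q}\epsilon_{p|q}(U),$$ where the sum is over all non-trivial unordered bipartitions $p|q$ of $\{1,\dots,n\}$, and for each such bipartition $$\epsilon_{p|q}(U)=2\left[1-\Bigg(\prod_{i=1}^n\frac{d_i}{d_i+1}\Bigg)\sum_{x'|y'}\operatorname{tr}\big[(\operatorname{tr}_{px'}|U\rangle\langle U|)^2\big]\right],$$ with the inner sum over all $2^n$ ordered bipartitions $x'|y'$ of $\{1',\dots,n'\}$ (i.e. all subsets $x'$, including $\emptyset$ and the whole set, with $y'$ the complement), and $\operatorname{tr}_{px'}$ the partial trace over the factors $\mathcal{H}_i$, $i\in p$, and $\mathcal{H}_{i'}$, $i'\in x'$.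
   Context: Let $\mathcal{H}'=\bigotimes_{i=1}^n\mathcal{H}_{i'}$ be a copy of $\mathcal{H}$ with $\dim\mathcal{H}_{i'}=d_i$. The state associated with $U$ is $|U\rangle=\frac{1}{\sqrt{d_1\cdots d_n}}\sum\langle j_1\dots j_n|U|j_{1'}\dots j_{n'}\rangle\,|j_1\dots j_n\rangle\otimes|j_{1'}\dots j_{n'}\rangle\in\mathcal{H}\otimes\mathcal{H}'$. For a pure state $|\psi\rangle\in\mathcal{H}$ and a bipartition $p|q$ of $\{1,\dots,n\}$, $\tau_{p|q}(|\psi\rangle)=2\big(1-\operatorname{tr}[(\operatorname{tr}_p|\psi\rangle\langle\psi|)^2]\big)$; the $n$-party one-tangle is $\tau_1=\frac{1}{2^{n-1}-1}\sum_{p|q}\tau_{p|q}$ (sum over non-trivial unordered bipartitions). $\epsilon_{p|q}(U)$ (resp. $\epsilon_1(U)$) is the average of $\tau_{p|q}(U|\psi_{\rm sep}\rangle)$ (resp. $\tau_1(U|\psi_{\rm sep}\rangle)$) over $|\psi_{\rm sep}\rangle=|\psi_1\rangle\otimes\cdots\otimes|\psi_n\rangle$, each $|\psi_i\rangle$ drawn independently from the unitarily invariant measure on pure states of $\mathcal{H}_i$. *)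

theory Defs
  imports "HOL-Probability.Probability"
begin

text \<open>Sites are natural numbers; a configuration of the sites in S with local
dimensions D is an extensional function S -> {..<D i}.  Vectors and operators
on the tensor product are complex-valued functions of configurations.\<close>

definition configs :: "nat set \<Rightarrow> (nat \<Rightarrow> nat) \<Rightarrow> (nat \<Rightarrow> nat) set" where
  "configs S D = PiE S (\<lambda>i. {..<D i})"

definition merge :: "nat set \<Rightarrow> (nat \<Rightarrow> nat) \<Rightarrow> (nat \<Rightarrow> nat) \<Rightarrow> (nat \<Rightarrow> nat)" where
  "merge T c a = (\<lambda>i. if i \<in> T then c i else a i)"

definition proj :: "((nat \<Rightarrow> nat) \<Rightarrow> complex) \<Rightarrow> (nat \<Rightarrow> nat) \<Rightarrow> (nat \<Rightarrow> nat) \<Rightarrow> complex" where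
  "proj \<psi> a b = \<psi> a * cnj (\<psi> b)"

text \<open>partial trace over the sites T (the result acts on the sites S - T)\<close>
definition ptrace :: "(nat \<Rightarrow> nat) \<Rightarrow> nat set \<Rightarrow> ((nat \<Rightarrow> nat) \<Rightarrow> (nat \<Rightarrow> nat) \<Rightarrow> complex)
    \<Rightarrow> (nat \<Rightarrow> nat) \<Rightarrow> (nat \<Rightarrow> nat) \<Rightarrow> complex" where
  "ptrace D T \<rho> = (\<lambda>a b. \<Sum>c\<in>configs T D. \<rho> (merge T c a) (merge T c b))"

definition mtrace :: "'a set \<Rightarrow> ('a \<Rightarrow> 'a \<Rightarrow> complex) \<Rightarrow> complex" where
  "mtrace K M = (\<Sum>a\<in>K. M a a)"

definition mmult :: "'a set \<Rightarrow> ('a \<Rightarrow> 'a \<Rightarrow> complex) \<Rightarrow> ('a \<Rightarrow> 'a \<Rightarrow> complex) \<Rightarrow> 'a \<Rightarrow> 'a \<Rightarrow> complex" where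
  "mmult K M N = (\<lambda>a b. \<Sum>c\<in>K. M a c * N c b)"

definition purity :: "nat set \<Rightarrow> (nat \<Rightarrow> nat) \<Rightarrow> nat set \<Rightarrow> ((nat \<Rightarrow> nat) \<Rightarrow> complex) \<Rightarrow> complex" where
  "purity S D T \<psi> =
     (let \<rho> = ptrace D T (proj \<psi>) in mtrace (configs (S - T) D) (mmult (configs (S - T) D) \<rho> \<rho>))"

definition tau_bip :: "nat \<Rightarrow> (nat \<Rightarrow> nat) \<Rightarrow> nat set \<Rightarrow> ((nat \<Rightarrow> nat) \<Rightarrow> complex) \<Rightarrow> complex" where
  "tau_bip n d p \<psi> = 2 * (1 - purity {..<n} d p \<psi>)"

text \<open>Non-trivial unordered bipartitions p|q of {..<n} (parties 0..n-1), each
represented by the part p not containing party 0: p \<subseteq> {1..<n}, p \<noteq> {}.\<close>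
definition nontriv_bip :: "nat \<Rightarrow> nat set set" where
  "nontriv_bip n = {p. p \<subseteq> {1..<n} \<and> p \<noteq> {}}"

definition tau1 :: "nat \<Rightarrow> (nat \<Rightarrow> nat) \<Rightarrow> ((nat \<Rightarrow> nat) \<Rightarrow> complex) \<Rightarrow> complex" where
  "tau1 n d \<psi> = (1 / (2 ^ (n - 1) - 1)) * (\<Sum>p\<in>nontriv_bip n. tau_bip n d p \<psi>)"

definition unitary_on :: "'a set \<Rightarrow> ('a \<Rightarrow> 'a \<Rightarrow> complex) \<Rightarrow> bool" where
  "unitary_on K V \<longleftrightarrow> (\<forall>a\<in>K. \<forall>b\<in>K. (\<Sum>k\<in>K. cnj (V k a) * V k b) = (if a = b then 1 else 0))"

definition apply_op :: "'a set \<Rightarrow> ('a \<Rightarrow> 'a \<Rightarrow> complex) \<Rightarrow> ('a \<Rightarrow> complex) \<Rightarrow> 'a \<Rightarrow> complex" where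
  "apply_op K V \<psi> = (\<lambda>j. \<Sum>k\<in>K. V j k * \<psi> k)"

definition prod_state :: "nat \<Rightarrow> (nat \<Rightarrow> nat \<Rightarrow> complex) \<Rightarrow> (nat \<Rightarrow> nat) \<Rightarrow> complex" where
  "prod_state n \<psi>s = (\<lambda>j. \<Prod>i<n. \<psi>s i (j i))"

definition vec_space :: "nat \<Rightarrow> (nat \<Rightarrow> complex) measure" where
  "vec_space m = PiM {..<m} (\<lambda>_. (borel :: complex measure))"

text \<open>The unitarily invariant probability measure on pure states (unit vectors) of C^m;
it is unique, so quantifying over all such measures is faithful.\<close>
definition haar_state_measure :: "nat \<Rightarrow> (nat \<Rightarrow> complex) measure \<Rightarrow> bool" where
  "haar_state_measure m \<mu> \<longleftrightarrow>
     sets \<mu> = sets (vec_space m) \<and> prob_space \<mu> \<and>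
     (AE v in \<mu>. (\<Sum>k<m. (cmod (v k))\<^sup>2) = 1) \<and>
     (\<forall>V. unitary_on {..<m} V \<longrightarrow>
        distr \<mu> (vec_space m) (\<lambda>v. restrict (\<lambda>k. \<Sum>l<m. V k l * v l) {..<m}) = \<mu>)"

definition eps_bip :: "nat \<Rightarrow> (nat \<Rightarrow> nat) \<Rightarrow> ((nat \<Rightarrow> nat) \<Rightarrow> (nat \<Rightarrow> nat) \<Rightarrow> complex)
    \<Rightarrow> (nat \<Rightarrow> (nat \<Rightarrow> complex) measure) \<Rightarrow> nat set \<Rightarrow> complex" where
  "eps_bip n d U \<mu> p = (LINT \<psi>s | PiM {..<n} \<mu>.
      tau_bip n d p (apply_op (configs {..<n} d) U (prod_state n \<psi>s)))"

definition eps1 :: "nat \<Rightarrow> (nat \<Rightarrow> nat) \<Rightarrow> ((nat \<Rightarrow> nat) \<Rightarrow> (nat \<Rightarrow> nat) \<Rightarrow> complex)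
    \<Rightarrow> (nat \<Rightarrow> (nat \<Rightarrow> complex) measure) \<Rightarrow> complex" where
  "eps1 n d U \<mu> = (LINT \<psi>s | PiM {..<n} \<mu>.
      tau1 n d (apply_op (configs {..<n} d) U (prod_state n \<psi>s)))"

text \<open>Doubled system H (x) H': sites 0..n-1 are H_1..H_n, sites n..2n-1 are H_1'..H_n'.\<close>
definition dd :: "nat \<Rightarrow> (nat \<Rightarrow> nat) \<Rightarrow> nat \<Rightarrow> nat" where
  "dd n d = (\<lambda>i. if i < n then d i else d (i - n))"

definition choi :: "nat \<Rightarrow> (nat \<Rightarrow> nat) \<Rightarrow> ((nat \<Rightarrow> nat) \<Rightarrow> (nat \<Rightarrow> nat) \<Rightarrow> complex)
    \<Rightarrow> (nat \<Rightarrow> nat) \<Rightarrow> complex" where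
  "choi n d U = (\<lambda>k. U (restrict k {..<n}) (restrict (\<lambda>i. k (i + n)) {..<n})
                     / complex_of_real (sqrt (real (\<Prod>i<n. d i))))"

end

(* The purity of U (psi_1 (x) ... (x) psi_n) across a cut p|q is a polynomial of degree (2, 2)
   in the amplitudes of each psi_i, so its average only involves the fourth moments
     E [v_a cnj(v_b) v_c cnj(v_e)] = (delta_ab delta_ce + delta_ae delta_cb) / (m (m + 1))
   of a Haar-random unit vector v of C^m.  These follow from unitary invariance alone: diagonal
   phases kill every moment whose indices are not paired, a rotation with entries 3/5 and 4/5
   relates E |v_a|^4 to E |v_a|^2 |v_c|^2, and normalisation fixes the constant.  Multiplying over
   the parties, the product of the two Kronecker terms expands into a sum over the sets X of
   parties whose input indices are exchanged, and the term of X is, up to the factor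
   (d_1 ... d_n)^2, the purity of the Choi state |U> across the cut p X'. *)

theory Submission
  imports Defs
begin

lemma borel_measurable_cnj [measurable]:
  "f \<in> borel_measurable M \<Longrightarrow> (\<lambda>x. cnj (f x)) \<in> borel_measurable M"
  by (rule borel_measurable_continuous_on[OF continuous_on_cnj[OF continuous_on_id]])

lemma prod_of_bool:
  "finite A \<Longrightarrow> (\<Prod>x\<in>A. of_bool (P x) :: 'b :: comm_semiring_1) = of_bool (\<forall>x\<in>A. P x)"
  by (induction A rule: finite_induct) auto

lemma sum_product4:
  fixes f g h l :: "'a \<Rightarrow> 'b :: comm_semiring_0"
  shows "sum f K * sum g K * sum h K * sum l K =
    (\<Sum>k1\<in>K. \<Sum>k3\<in>K. \<Sum>k2\<in>K. \<Sum>k4\<in>K. f k1 * g k2 * h k3 * l k4)"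
proof -
  have "sum f K * sum g K * sum h K * sum l K = (sum f K * sum h K) * (sum g K * sum l K)"
    by (simp add: mult_ac)
  also have "\<dots> = (\<Sum>k1\<in>K. \<Sum>k3\<in>K. \<Sum>k2\<in>K. \<Sum>k4\<in>K. (f k1 * h k3) * (g k2 * l k4))"
    unfolding sum_product[of f K h K] sum_product[of g K l K]
    by (simp only: sum_distrib_right) (simp only: sum_distrib_left)
  finally show ?thesis
    by (simp add: mult_ac)
qed

lemma sum_of_bool_pair:
  fixes F :: "'a \<Rightarrow> 'a \<Rightarrow> 'b :: comm_semiring_1"
  assumes "finite K" "a \<in> K" "b \<in> K"
  shows "(\<Sum>x\<in>K. \<Sum>y\<in>K. F x y * of_bool (x = a \<and> y = b)) = F a b"
proof -
  have "(\<Sum>y\<in>K. F x y * of_bool (x = a \<and> y = b)) = of_bool (x = a) * F x b" for x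
    using assms by (cases "x = a") auto
  then show ?thesis
    using assms by simp
qed

lemma sum_exchange_collapse:
  fixes F :: "'a \<Rightarrow> 'a \<Rightarrow> 'a \<Rightarrow> 'a \<Rightarrow> 'b :: comm_semiring_1"
  assumes "finite K"
    and closed: "\<And>X k1 k3. X \<in> P \<Longrightarrow> k1 \<in> K \<Longrightarrow> k3 \<in> K \<Longrightarrow> f X k1 k3 \<in> K \<and> g X k1 k3 \<in> K"
  shows "(\<Sum>k1\<in>K. \<Sum>k3\<in>K. \<Sum>k2\<in>K. \<Sum>k4\<in>K.
            F k1 k2 k3 k4 * (\<Sum>X\<in>P. of_bool (k2 = f X k1 k3 \<and> k4 = g X k1 k3)))
       = (\<Sum>X\<in>P. \<Sum>k1\<in>K. \<Sum>k3\<in>K. F k1 (f X k1 k3) k3 (g X k1 k3))"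
proof -
  have "(\<Sum>k2\<in>K. \<Sum>k4\<in>K. F k1 k2 k3 k4 * (\<Sum>X\<in>P. of_bool (k2 = f X k1 k3 \<and> k4 = g X k1 k3)))
      = (\<Sum>X\<in>P. F k1 (f X k1 k3) k3 (g X k1 k3))" if "k1 \<in> K" "k3 \<in> K" for k1 k3
    unfolding sum_distrib_left sum.swap[where B = P]
    using that closed \<open>finite K\<close> by (intro sum.cong refl sum_of_bool_pair) auto
  then show ?thesis
    by (simp add: sum.swap[where B = P])
qed

lemma
  fixes f :: "'i \<Rightarrow> 'a \<Rightarrow> 'b :: {real_normed_field, banach, second_countable_topology}"
  assumes "finite I" and prob: "\<And>i. i \<in> I \<Longrightarrow> prob_space (M i)"
    and integrable: "\<And>i. i \<in> I \<Longrightarrow> integrable (M i) (f i)"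
  shows integrable_PiM_prod: "integrable (PiM I M) (\<lambda>x. \<Prod>i\<in>I. f i (x i))"
    and integral_PiM_prod: "integral\<^sup>L (PiM I M) (\<lambda>x. \<Prod>i\<in>I. f i (x i)) = (\<Prod>i\<in>I. integral\<^sup>L (M i) (f i))"
proof -
  \<comment> \<open>the factors outside \<open>I\<close> are irrelevant; they only have to make the family \<open>\<sigma>\<close>-finite\<close>
  define M' where "M' i = (if i \<in> I then M i else return (count_space UNIV) undefined)" for i
  interpret product_sigma_finite M'
    by (rule product_sigma_finite.intro)
      (use prob in \<open>auto simp: M'_def prob_space_return intro: prob_space_imp_sigma_finite\<close>)
  have PiM_eq: "PiM I M = PiM I M'"
    by (rule PiM_cong) (auto simp: M'_def)
  have integrable': "integrable (M' i) (f i)" if "i \<in> I" for i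
    using integrable that by (simp add: M'_def)
  show "integrable (PiM I M) (\<lambda>x. \<Prod>i\<in>I. f i (x i))"
    unfolding PiM_eq using \<open>finite I\<close> integrable' by (rule product_integrable_prod)
  have "integral\<^sup>L (PiM I M') (\<lambda>x. \<Prod>i\<in>I. f i (x i)) = (\<Prod>i\<in>I. integral\<^sup>L (M' i) (f i))"
    using \<open>finite I\<close> integrable' by (rule product_integral_prod)
  then show "integral\<^sup>L (PiM I M) (\<lambda>x. \<Prod>i\<in>I. f i (x i)) = (\<Prod>i\<in>I. integral\<^sup>L (M i) (f i))"
    unfolding PiM_eq by (simp add: M'_def)
qed

section \<open>Fourth moments of Haar-random pure states\<close>

definition fourth_moment :: "(nat \<Rightarrow> complex) measure \<Rightarrow> nat \<Rightarrow> nat \<Rightarrow> nat \<Rightarrow> nat \<Rightarrow> complex" where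
  "fourth_moment \<mu> a b c e = (LINT v|\<mu>. v a * cnj (v b) * v c * cnj (v e))"

lemma fourth_moment_commute:
  "fourth_moment \<mu> a b c e = fourth_moment \<mu> c b a e"
  "fourth_moment \<mu> a b c e = fourth_moment \<mu> a e c b"
  unfolding fourth_moment_def by (simp_all add: mult_ac)

lemma borel_measurable_vec_space_component [measurable]:
  "a < m \<Longrightarrow> (\<lambda>v. v a) \<in> borel_measurable (vec_space m)"
  unfolding vec_space_def by (rule measurable_component_singleton) auto

(* The Pythagorean entries 3/5, 4/5 keep the rotation of the (a, c)-plane rational. *)
definition rotation :: "nat \<Rightarrow> nat \<Rightarrow> nat \<Rightarrow> nat \<Rightarrow> complex" where
  "rotation a c k l =
    (if k = a then (if l = a then 3/5 else if l = c then 4/5 else 0)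
     else if k = c then (if l = a then -4/5 else if l = c then 3/5 else 0)
     else if k = l then 1 else 0)"

lemma unitary_on_rotation:
  assumes "finite K" "a \<in> K" "c \<in> K" "a \<noteq> c"
  shows "unitary_on K (rotation a c)"
  unfolding unitary_on_def
proof (intro ballI)
  fix x y assume "x \<in> K" "y \<in> K"
  let ?F = "\<lambda>k. cnj (rotation a c k x) * rotation a c k y"
  have K: "K = insert a (insert c (K - {a, c}))"
    using assms by auto
  have "(\<Sum>k\<in>K - {a, c}. ?F k) = (\<Sum>k\<in>K - {a, c}. if k = x then (if k = y then 1 else 0) else 0)"
    by (rule sum.cong) (auto simp: rotation_def)
  also have "\<dots> = (if x = y \<and> x \<notin> {a, c} then 1 else 0)"
    using \<open>x \<in> K\<close> assms(1) by (simp add: if_distrib[of "\<lambda>x. x * _"] cong: if_cong)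
  finally show "(\<Sum>k\<in>K. ?F k) = (if x = y then 1 else 0)"
    using assms by (subst K) (auto simp: rotation_def)
qed

lemma rotation_apply:
  assumes "a < m" "c < m" "a \<noteq> c"
  shows "(\<Sum>l<m. rotation a c a l * v l) = (\<Sum>i\<in>{a, c}. (if i = a then 3/5 else 4/5) * v i)"
proof -
  have "(\<Sum>l<m. rotation a c a l * v l) =
      (\<Sum>l<m. (if l = a then 3/5 * v a else 0) + (if l = c then 4/5 * v c else 0))"
    by (rule sum.cong) (use assms in \<open>auto simp: rotation_def\<close>)
  then show ?thesis
    using assms by (simp add: sum.distrib)
qed

locale haar_state =
  fixes m :: nat and \<mu> :: "(nat \<Rightarrow> complex) measure"
  assumes haar_state_measure: "haar_state_measure m \<mu>"
begin

sublocale prob_space \<mu>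
  using haar_state_measure unfolding haar_state_measure_def by auto

lemma measurable_eq: "measurable \<mu> N = measurable (vec_space m) N"
  using haar_state_measure unfolding haar_state_measure_def by (intro measurable_cong_sets) auto

lemma AE_normalized: "AE v in \<mu>. (\<Sum>k<m. v k * cnj (v k)) = 1"
proof -
  have sum_eq: "(\<Sum>k<m. v k * cnj (v k)) = of_real (\<Sum>k<m. (cmod (v k))\<^sup>2)" for v :: "nat \<Rightarrow> complex"
    by (simp only: of_real_sum complex_norm_square)
  have "AE v in \<mu>. (\<Sum>k<m. (cmod (v k))\<^sup>2) = 1"
    using haar_state_measure unfolding haar_state_measure_def by auto
  then show ?thesis
    by eventually_elim (metis sum_eq of_real_1)
qed

lemma AE_component_bounded: "AE v in \<mu>. \<forall>a<m. cmod (v a) \<le> 1"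
  using haar_state_measure unfolding haar_state_measure_def
proof (elim conjE AE_mp, intro AE_I2 impI allI)
  fix v :: "nat \<Rightarrow> complex" and a assume norm: "(\<Sum>k<m. (cmod (v k))\<^sup>2) = 1" and "a < m"
  then have "(cmod (v a))\<^sup>2 \<le> 1\<^sup>2"
    using member_le_sum[of a "{..<m}" "\<lambda>k. (cmod (v k))\<^sup>2"] by simp
  then show "cmod (v a) \<le> 1" by (rule power2_le_imp_le) simp
qed

lemma integrable_fourth_monomial:
  assumes "a < m" "b < m" "c < m" "e < m"
  shows "integrable \<mu> (\<lambda>v. v a * cnj (v b) * v c * cnj (v e))"
proof (rule integrable_const_bound[where B = 1])
  show "AE v in \<mu>. norm (v a * cnj (v b) * v c * cnj (v e)) \<le> 1"
    using AE_component_bounded by eventually_elim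
      (use assms in \<open>auto simp: norm_mult intro!: mult_le_one\<close>)
  show "(\<lambda>v. v a * cnj (v b) * v c * cnj (v e)) \<in> borel_measurable \<mu>"
    using assms by (simp add: measurable_eq)
qed

lemma fourth_moment_unitary_invariant:
  assumes V: "unitary_on {..<m} V" and "a < m" "b < m" "c < m" "e < m"
  shows "fourth_moment \<mu> a b c e =
    (LINT v|\<mu>. (\<Sum>l<m. V a l * v l) * cnj (\<Sum>l<m. V b l * v l) *
                 (\<Sum>l<m. V c l * v l) * cnj (\<Sum>l<m. V e l * v l))"
proof -
  let ?V = "\<lambda>v. restrict (\<lambda>k. \<Sum>l<m. V k l * v l) {..<m}"
  have distr_eq: "distr \<mu> (vec_space m) ?V = \<mu>"
    using haar_state_measure V unfolding haar_state_measure_def by auto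
  have "?V \<in> measurable \<mu> (vec_space m)"
    unfolding measurable_eq by (subst (2) vec_space_def, rule measurable_restrict) measurable
  then have "fourth_moment \<mu> a b c e = (LINT v|\<mu>. ?V v a * cnj (?V v b) * ?V v c * cnj (?V v e))"
    unfolding fourth_moment_def
    by (subst (1) distr_eq[symmetric], subst integral_distr) (use assms in simp_all)
  then show ?thesis
    using assms by simp
qed

lemma fourth_moment_eq_0:
  assumes "a < m" "b < m" "c < m" "e < m" and unpaired: "\<not> ((a = b \<and> c = e) \<or> (a = e \<and> c = b))"
  shows "fourth_moment \<mu> a b c e = 0"
proof -
  define phase where "phase r k = (if k = r then \<i> else 1)" for r k :: nat
  define factor where "factor r = phase r a * cnj (phase r b) * phase r c * cnj (phase r e)" for r
  have "fourth_moment \<mu> a b c e = factor r * fourth_moment \<mu> a b c e" for r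
  proof -
    define D where "D k l = (if k = l then phase r k else 0)" for k l
    have "unitary_on {..<m} D"
      unfolding unitary_on_def D_def
      by (auto simp: phase_def if_distrib[of cnj] if_distrib[of "\<lambda>x. x * _"] cong: if_cong)
    moreover have D_apply: "(\<Sum>l<m. D x l * v l) = phase r x * v x" if "x < m" for x v
      using that by (simp add: D_def if_distrib[of "\<lambda>x. x * _"] cong: if_cong)
    ultimately have "fourth_moment \<mu> a b c e =
      (LINT v|\<mu>. factor r * (v a * cnj (v b) * v c * cnj (v e)))"
      using fourth_moment_unitary_invariant[of D] assms by (simp add: D_apply factor_def mult_ac)
    then show ?thesis
      unfolding fourth_moment_def by simp
  qed
  moreover have "\<exists>r. factor r \<noteq> 1"
    \<comment> \<open>for unpaired indices the phase \<open>\<i>\<close> on one of \<open>a\<close>, \<open>b\<close>, \<open>c\<close> does not cancel\<close>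
    using unpaired by (cases "factor a = 1"; cases "factor b = 1"; cases "factor c = 1")
      (auto simp: factor_def phase_def split: if_splits)
  ultimately show ?thesis
    by (metis mult_cancel_right2)
qed

lemma integral_fourth_monomial_sum:
  assumes "J \<subseteq> {..<m}" "finite J"
  shows "(LINT v|\<mu>. (\<Sum>i1\<in>J. \<Sum>i2\<in>J. \<Sum>i3\<in>J. \<Sum>i4\<in>J. C i1 i2 i3 i4 * (v i1 * cnj (v i2) * v i3 * cnj (v i4))))
    = (\<Sum>i1\<in>J. \<Sum>i2\<in>J. \<Sum>i3\<in>J. \<Sum>i4\<in>J. C i1 i2 i3 i4 * fourth_moment \<mu> i1 i2 i3 i4)"
proof -
  have "integrable \<mu> (\<lambda>v. C i1 i2 i3 i4 * (v i1 * cnj (v i2) * v i3 * cnj (v i4)))"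
    if "i1 \<in> J" "i2 \<in> J" "i3 \<in> J" "i4 \<in> J" for i1 i2 i3 i4
    using that assms by (intro integrable_mult_right integrable_fourth_monomial) auto
  then show ?thesis
    unfolding fourth_moment_def by (simp add: Bochner_Integration.integrable_sum)
qed

lemma fourth_moment_rotation:
  assumes "a < m" "c < m" "a \<noteq> c"
  shows "625 * fourth_moment \<mu> a a a a =
    81 * fourth_moment \<mu> a a a a + 256 * fourth_moment \<mu> c c c c + 576 * fourth_moment \<mu> a a c c"
proof -
  define w where "w i = (if i = a then 3/5 else (4/5 :: complex))" for i
  let ?J = "{a, c}"
  have row: "(\<Sum>l<m. rotation a c a l * v l) = (\<Sum>i\<in>?J. w i * v i)" for v
    using rotation_apply[OF assms] unfolding w_def .
  have "fourth_moment \<mu> a a a a =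
      (LINT v|\<mu>. (\<Sum>i\<in>?J. w i * v i) * cnj (\<Sum>i\<in>?J. w i * v i) * (\<Sum>i\<in>?J. w i * v i) * cnj (\<Sum>i\<in>?J. w i * v i))"
    unfolding row[symmetric]
    by (rule fourth_moment_unitary_invariant) (use assms in \<open>auto intro: unitary_on_rotation\<close>)
  also have "\<dots> = (LINT v|\<mu>. (\<Sum>i1\<in>?J. \<Sum>i2\<in>?J. \<Sum>i3\<in>?J. \<Sum>i4\<in>?J.
      (w i1 * w i2 * w i3 * w i4) * (v i1 * cnj (v i2) * v i3 * cnj (v i4))))"
    by (rule Bochner_Integration.integral_cong) (use assms in \<open>simp_all add: w_def field_simps\<close>)
  also have "\<dots> = (\<Sum>i1\<in>?J. \<Sum>i2\<in>?J. \<Sum>i3\<in>?J. \<Sum>i4\<in>?J. (w i1 * w i2 * w i3 * w i4) * fourth_moment \<mu> i1 i2 i3 i4)"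
    using assms by (intro integral_fourth_monomial_sum) auto
  also have "\<dots> = (81/625) * fourth_moment \<mu> a a a a + (256/625) * fourth_moment \<mu> c c c c
      + (576/625) * fourth_moment \<mu> a a c c"
    using assms fourth_moment_commute[of \<mu> c c a a] fourth_moment_commute[of \<mu> c a a c]
      fourth_moment_commute[of \<mu> a c c a]
    by (simp add: w_def fourth_moment_eq_0)
  finally show ?thesis
    by (simp add: field_simps)
qed

lemma fourth_moment_diagonal:
  assumes "a < m" "c < m" "a \<noteq> c"
  shows "fourth_moment \<mu> c c c c = fourth_moment \<mu> a a a a"
    and "fourth_moment \<mu> a a a a = 2 * fourth_moment \<mu> a a c c"
proof -
  define A B C where "A = fourth_moment \<mu> a a a a" and "B = fourth_moment \<mu> a a c c"
    and "C = fourth_moment \<mu> c c c c"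
  have "fourth_moment \<mu> c c a a = B"
    using fourth_moment_commute[of \<mu> c c a a] fourth_moment_commute[of \<mu> a c c a] by (simp add: B_def)
  then have eq_a: "625 * A = 81 * A + 256 * C + 576 * B" and eq_c: "625 * C = 81 * C + 256 * A + 576 * B"
    using fourth_moment_rotation[OF assms] fourth_moment_rotation[OF assms(2,1) assms(3)[symmetric]]
    by (simp_all add: A_def B_def C_def)
  have "800 * (C - A) = (625 * C - (81 * C + 256 * A + 576 * B)) - (625 * A - (81 * A + 256 * C + 576 * B))"
    by (simp add: algebra_simps)
  then show "C = A"
    using eq_a eq_c by simp
  have "288 * (A - 2 * B) = 625 * A - (81 * A + 256 * A + 576 * B)"
    by (simp add: algebra_simps)
  with eq_a \<open>C = A\<close> show "A = 2 * B"
    by simp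
qed

lemma fourth_moment_normalization: "(\<Sum>a<m. \<Sum>c<m. fourth_moment \<mu> a a c c) = 1"
proof -
  let ?f = "\<lambda>a c v. v a * cnj (v a) * v c * cnj (v c)"
  have integrable: "integrable \<mu> (?f a c)" if "a < m" "c < m" for a c
    using that by (simp add: integrable_fourth_monomial)
  have "(\<Sum>a<m. \<Sum>c<m. fourth_moment \<mu> a a c c) = (\<Sum>a<m. LINT v|\<mu>. (\<Sum>c<m. ?f a c v))"
    unfolding fourth_moment_def
    by (intro sum.cong refl Bochner_Integration.integral_sum[symmetric]) (auto intro: integrable)
  also have "\<dots> = (LINT v|\<mu>. (\<Sum>a<m. \<Sum>c<m. ?f a c v))"
    by (intro Bochner_Integration.integral_sum[symmetric]) (auto intro!: integrable_sum integrable)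
  also have "\<dots> = (LINT v|\<mu>. 1)"
  proof (rule integral_cong_AE)
    have square: "(\<Sum>a<m. \<Sum>c<m. ?f a c v) = (\<Sum>k<m. v k * cnj (v k))\<^sup>2" for v
      by (simp add: power2_eq_square sum_product mult.assoc)
    show "AE v in \<mu>. (\<Sum>a<m. \<Sum>c<m. ?f a c v) = 1"
      using AE_normalized by eventually_elim (simp add: square)
  qed (simp_all add: measurable_eq)
  finally show ?thesis
    by (simp add: prob_space)
qed

lemma fourth_moment_pair:
  assumes "a < m" "c < m"
  shows "fourth_moment \<mu> a a c c = (if a = c then 2 else 1) / (of_nat m * (of_nat m + 1))"
proof -
  define \<alpha> where "\<alpha> = fourth_moment \<mu> a a a a"
  have diagonal: "fourth_moment \<mu> x x x x = \<alpha>" if "x < m" for x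
    using fourth_moment_diagonal(1)[OF assms(1) that] by (cases "x = a") (auto simp: \<alpha>_def)
  have pair: "fourth_moment \<mu> x x y y = (if x = y then \<alpha> else \<alpha> / 2)" if "x < m" "y < m" for x y
    using fourth_moment_diagonal(2)[OF that] diagonal[OF that(1)] by auto
  have "1 = (\<Sum>x<m. \<Sum>y<m. fourth_moment \<mu> x x y y)"
    using fourth_moment_normalization by simp
  also have "\<dots> = (\<Sum>x<m. \<Sum>y<m. \<alpha> / 2 + (if x = y then \<alpha> / 2 else 0))"
    by (intro sum.cong refl) (simp add: pair)
  also have "\<dots> = of_nat m * (of_nat m * (\<alpha> / 2) + \<alpha> / 2)"
    by (simp add: sum.distrib)
  finally have "of_nat m * (of_nat m + 1) * \<alpha> = 2"
    by (simp add: field_simps)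
  moreover have "(of_nat m * (of_nat m + 1) :: complex) \<noteq> 0"
    using assms(1) by (metis of_nat_Suc of_nat_mult of_nat_eq_0_iff mult_is_0 nat.distinct(1) add.commute gr_implies_not0)
  ultimately have "\<alpha> = 2 / (of_nat m * (of_nat m + 1))"
    by (simp add: eq_divide_eq mult.commute)
  then show ?thesis
    using pair[OF assms] by (cases "a = c") auto
qed

theorem fourth_moment_eq:
  assumes "a < m" "b < m" "c < m" "e < m"
  shows "fourth_moment \<mu> a b c e =
    (of_bool (a = b \<and> c = e) + of_bool (a = e \<and> c = b)) / (of_nat m * (of_nat m + 1))"
proof -
  consider "\<not> ((a = b \<and> c = e) \<or> (a = e \<and> c = b))" | "b = a" "e = c" | "b = c" "e = a"
    by blast
  then show ?thesis
  proof cases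
    case 1
    then have unpaired: "of_bool (a = b \<and> c = e) = (0 :: complex)" "of_bool (a = e \<and> c = b) = (0 :: complex)"
      unfolding of_bool_eq_0_iff by auto
    show ?thesis
      unfolding fourth_moment_eq_0[OF assms 1] unpaired by simp
  next
    case 2
    then show ?thesis
      using fourth_moment_pair[of a c] assms by auto
  next
    case 3
    then have "fourth_moment \<mu> a b c e = fourth_moment \<mu> a a c c"
      using fourth_moment_commute(2)[of \<mu> a c c a] by simp
    with 3 show ?thesis
      using fourth_moment_pair[of a c] assms by auto
  qed
qed

end

section \<open>Purities as sums over configurations\<close>

lemma finite_configs: "finite S \<Longrightarrow> finite (configs S D)"
  unfolding configs_def by (intro finite_PiE) auto

lemma configs_extensional: "k \<in> configs S D \<Longrightarrow> i \<notin> S \<Longrightarrow> k i = undefined"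
  unfolding configs_def by (auto simp: PiE_iff extensional_def)

lemma configs_less: "k \<in> configs S D \<Longrightarrow> i \<in> S \<Longrightarrow> k i < D i"
  unfolding configs_def by (auto simp: PiE_iff)

lemma merge_in_configs: "T \<subseteq> S \<Longrightarrow> c \<in> configs S D \<Longrightarrow> a \<in> configs S D \<Longrightarrow> merge T c a \<in> configs S D"
  unfolding configs_def merge_def by (auto simp: PiE_iff extensional_def)

lemma merge_merge: "merge T (merge T c a) (merge T c' b) = merge T c b"
  unfolding merge_def by auto

lemma bij_betw_merge:
  assumes "T \<subseteq> S"
  shows "bij_betw (\<lambda>(c, a). merge T c a) (configs T D \<times> configs (S - T) D) (configs S D)"
proof (rule bij_betwI[where g = "\<lambda>g. (restrict g T, restrict g (S - T))"])
  show "(\<lambda>(c, a). merge T c a) \<in> configs T D \<times> configs (S - T) D \<rightarrow> configs S D"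
    using assms unfolding configs_def merge_def by (auto simp: PiE_iff extensional_def)
  show "(\<lambda>g. (restrict g T, restrict g (S - T))) \<in> configs S D \<rightarrow> configs T D \<times> configs (S - T) D"
    using assms unfolding configs_def by (auto simp: PiE_iff)
  show "(\<lambda>g. (restrict g T, restrict g (S - T))) ((\<lambda>(c, a). merge T c a) x) = x"
    if "x \<in> configs T D \<times> configs (S - T) D" for x
    using that unfolding configs_def merge_def by (cases x) (auto simp: PiE_iff extensional_def fun_eq_iff)
  show "(\<lambda>(c, a). merge T c a) (restrict g T, restrict g (S - T)) = g" if "g \<in> configs S D" for g
    using that assms unfolding configs_def merge_def by (auto simp: PiE_iff extensional_def fun_eq_iff)
qed

lemma sum_configs_merge:
  assumes "T \<subseteq> S" "finite S"
  shows "(\<Sum>g\<in>configs S D. f g) = (\<Sum>a\<in>configs (S - T) D. \<Sum>c\<in>configs T D. f (merge T c a))"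
proof -
  have "finite (configs T D)" "finite (configs (S - T) D)"
    using assms by (auto intro: finite_configs finite_subset)
  then have "(\<Sum>c\<in>configs T D. \<Sum>a\<in>configs (S - T) D. f (merge T c a)) =
      (\<Sum>x\<in>configs T D \<times> configs (S - T) D. f ((\<lambda>(c, a). merge T c a) x))"
    by (simp add: sum.cartesian_product prod.case_distrib)
  also have "\<dots> = (\<Sum>g\<in>configs S D. f g)"
    by (rule sum.reindex_bij_betw[OF bij_betw_merge[OF assms(1)]])
  finally show ?thesis
    by (simp add: sum.swap[where A = "configs T D"])
qed

lemma purity_eq_sum:
  assumes "T \<subseteq> S" "finite S"
  shows "purity S D T \<psi> = (\<Sum>g1\<in>configs S D. \<Sum>g2\<in>configs S D.
     \<psi> g1 * cnj (\<psi> (merge T g1 g2)) * \<psi> g2 * cnj (\<psi> (merge T g2 g1)))"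
proof -
  let ?A = "configs (S - T) D" and ?C = "configs T D"
  have "purity S D T \<psi> = (\<Sum>a\<in>?A. \<Sum>b\<in>?A. \<Sum>c\<in>?C. \<Sum>c'\<in>?C.
      \<psi> (merge T c a) * cnj (\<psi> (merge T c b)) * (\<psi> (merge T c' b) * cnj (\<psi> (merge T c' a))))"
    unfolding purity_def ptrace_def mtrace_def mmult_def proj_def Let_def by (simp add: sum_product)
  also have "\<dots> = (\<Sum>a\<in>?A. \<Sum>c\<in>?C. \<Sum>b\<in>?A. \<Sum>c'\<in>?C.
      \<psi> (merge T c a) * cnj (\<psi> (merge T c b)) * (\<psi> (merge T c' b) * cnj (\<psi> (merge T c' a))))"
    by (rule sum.cong[OF refl], rule sum.swap)
  also have "\<dots> = (\<Sum>g1\<in>configs S D. \<Sum>g2\<in>configs S D.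
     \<psi> g1 * cnj (\<psi> (merge T g1 g2)) * \<psi> g2 * cnj (\<psi> (merge T g2 g1)))"
    by (simp add: sum_configs_merge[OF assms] merge_merge mult_ac)
  finally show ?thesis .
qed

definition join :: "nat \<Rightarrow> (nat \<Rightarrow> nat) \<Rightarrow> (nat \<Rightarrow> nat) \<Rightarrow> nat \<Rightarrow> nat" where
  "join n j k = (\<lambda>i. if i < n then j i else if i < 2 * n then k (i - n) else undefined)"

lemma join_in_configs:
  "j \<in> configs {..<n} d \<Longrightarrow> k \<in> configs {..<n} d \<Longrightarrow> join n j k \<in> configs {..<2 * n} (dd n d)"
  unfolding configs_def join_def dd_def by (auto simp: PiE_iff extensional_def)

lemma bij_betw_join:
  "bij_betw (\<lambda>(j, k). join n j k) (configs {..<n} d \<times> configs {..<n} d) (configs {..<2 * n} (dd n d))"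
proof (rule bij_betwI[where g = "\<lambda>g. (restrict g {..<n}, restrict (\<lambda>i. g (i + n)) {..<n})"])
  show "(\<lambda>(j, k). join n j k) \<in> configs {..<n} d \<times> configs {..<n} d \<rightarrow> configs {..<2 * n} (dd n d)"
    using join_in_configs by auto
  show "(\<lambda>g. (restrict g {..<n}, restrict (\<lambda>i. g (i + n)) {..<n}))
      \<in> configs {..<2 * n} (dd n d) \<rightarrow> configs {..<n} d \<times> configs {..<n} d"
  proof
    fix g assume g: "g \<in> configs {..<2 * n} (dd n d)"
    have "g i < d i" "g (i + n) < d i" if "i < n" for i
      using configs_less[OF g, of i] configs_less[OF g, of "i + n"] that by (simp_all add: dd_def)
    then show "(restrict g {..<n}, restrict (\<lambda>i. g (i + n)) {..<n}) \<in> configs {..<n} d \<times> configs {..<n} d"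
      unfolding configs_def by auto
  qed
  show "(\<lambda>g. (restrict g {..<n}, restrict (\<lambda>i. g (i + n)) {..<n})) ((\<lambda>(j, k). join n j k) x) = x"
    if "x \<in> configs {..<n} d \<times> configs {..<n} d" for x
    using that unfolding configs_def join_def by (cases x) (auto simp: PiE_iff extensional_def fun_eq_iff)
  show "(\<lambda>(j, k). join n j k) (restrict g {..<n}, restrict (\<lambda>i. g (i + n)) {..<n}) = g"
    if "g \<in> configs {..<2 * n} (dd n d)" for g
    using that unfolding configs_def join_def by (auto simp: PiE_iff extensional_def fun_eq_iff)
qed

lemma sum_configs_join:
  "(\<Sum>g\<in>configs {..<2 * n} (dd n d). f g) = (\<Sum>j\<in>configs {..<n} d. \<Sum>k\<in>configs {..<n} d. f (join n j k))"
  by (simp add: sum.reindex_bij_betw[OF bij_betw_join, symmetric] sum.cartesian_product finite_configs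
      prod.case_distrib)

lemma merge_join:
  assumes "p \<subseteq> {..<n}" "X \<subseteq> {..<n}"
  shows "merge (p \<union> (\<lambda>i. i + n) ` X) (join n j1 k1) (join n j2 k2) = join n (merge p j1 j2) (merge X k1 k2)"
proof
  fix i
  have "i \<in> (\<lambda>i. i + n) ` X \<longleftrightarrow> n \<le> i \<and> i - n \<in> X"
    by force
  then show "merge (p \<union> (\<lambda>i. i + n) ` X) (join n j1 k1) (join n j2 k2) i = join n (merge p j1 j2) (merge X k1 k2) i"
    using assms unfolding merge_def join_def by auto
qed

lemma choi_join:
  assumes "j \<in> configs {..<n} d" "k \<in> configs {..<n} d"
  shows "choi n d U (join n j k) = U j k / complex_of_real (sqrt (real (\<Prod>i<n. d i)))"
proof -
  have "restrict (join n j k) {..<n} = j" "restrict (\<lambda>i. join n j k (i + n)) {..<n} = k"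
    using assms unfolding configs_def join_def by (auto simp: PiE_iff extensional_def fun_eq_iff)
  then show ?thesis
    unfolding choi_def by simp
qed

definition exchange_sum ::
    "(nat \<Rightarrow> nat) set \<Rightarrow> ((nat \<Rightarrow> nat) \<Rightarrow> (nat \<Rightarrow> nat) \<Rightarrow> complex) \<Rightarrow> nat set \<Rightarrow> nat set \<Rightarrow> complex" where
  "exchange_sum K U p X = (\<Sum>j1\<in>K. \<Sum>k1\<in>K. \<Sum>j2\<in>K. \<Sum>k2\<in>K.
     U j1 k1 * cnj (U (merge p j1 j2) (merge X k1 k2)) * U j2 k2 * cnj (U (merge p j2 j1) (merge X k2 k1)))"

lemma purity_choi:
  assumes "p \<subseteq> {..<n}" "X \<subseteq> {..<n}"
  shows "purity {..<2 * n} (dd n d) (p \<union> (\<lambda>i. i + n) ` X) (choi n d U) =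
    exchange_sum (configs {..<n} d) U p X / (of_nat (\<Prod>i<n. d i))\<^sup>2"
proof -
  let ?K = "configs {..<n} d"
  define s where "s = complex_of_real (sqrt (real (\<Prod>i<n. d i)))"
  have s4: "s * s * s * s = (of_nat (\<Prod>i<n. d i))\<^sup>2"
  proof -
    have "s * s = of_nat (\<Prod>i<n. d i)"
      unfolding s_def of_real_mult[symmetric] by (simp only: real_sqrt_mult_self abs_of_nat of_real_of_nat_eq)
    then show ?thesis
      by (simp add: power2_eq_square mult.assoc)
  qed
  have choi: "choi n d U (join n j k) = U j k / s" if "j \<in> ?K" "k \<in> ?K" for j k
    using choi_join[OF that] unfolding s_def .
  have cnj_s: "cnj s = s"
    unfolding s_def by simp
  let ?T = "p \<union> (\<lambda>i. i + n) ` X"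
  have "purity {..<2 * n} (dd n d) ?T (choi n d U) =
    (\<Sum>g1\<in>configs {..<2 * n} (dd n d). \<Sum>g2\<in>configs {..<2 * n} (dd n d).
       choi n d U g1 * cnj (choi n d U (merge ?T g1 g2)) * choi n d U g2 * cnj (choi n d U (merge ?T g2 g1)))"
    using assms by (intro purity_eq_sum) auto
  also have "\<dots> = (\<Sum>j1\<in>?K. \<Sum>k1\<in>?K. \<Sum>j2\<in>?K. \<Sum>k2\<in>?K.
       choi n d U (join n j1 k1) * cnj (choi n d U (join n (merge p j1 j2) (merge X k1 k2))) *
       choi n d U (join n j2 k2) * cnj (choi n d U (join n (merge p j2 j1) (merge X k2 k1))))"
    by (simp only: sum_configs_join merge_join[OF assms])
  also have "\<dots> = (\<Sum>j1\<in>?K. \<Sum>k1\<in>?K. \<Sum>j2\<in>?K. \<Sum>k2\<in>?K.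
       U j1 k1 * cnj (U (merge p j1 j2) (merge X k1 k2)) * U j2 k2 * cnj (U (merge p j2 j1) (merge X k2 k1))
       / (s * s * s * s))"
    using assms by (intro sum.cong refl) (simp add: choi merge_in_configs cnj_s times_divide_times_eq)
  finally show ?thesis
    unfolding s4 exchange_sum_def by (simp add: sum_divide_distrib)
qed

section \<open>Averaging over random product states\<close>

lemma prod_pairings_eq_sum_exchanges:
  assumes "k1 \<in> configs {..<n} d" "k2 \<in> configs {..<n} d" "k3 \<in> configs {..<n} d" "k4 \<in> configs {..<n} d"
  shows "(\<Prod>i<n. of_bool (k1 i = k2 i \<and> k3 i = k4 i) + of_bool (k1 i = k4 i \<and> k3 i = k2 i) :: 'b :: comm_semiring_1)
    = (\<Sum>X\<in>Pow {..<n}. of_bool (k2 = merge X k1 k3 \<and> k4 = merge X k3 k1))"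
proof -
  have exchange: "(\<forall>i\<in>X. k1 i = k2 i \<and> k3 i = k4 i) \<and> (\<forall>i\<in>{..<n} - X. k1 i = k4 i \<and> k3 i = k2 i)
      \<longleftrightarrow> k2 = merge X k1 k3 \<and> k4 = merge X k3 k1" if "X \<subseteq> {..<n}" for X
  proof -
    have "k1 i = undefined \<and> k2 i = undefined \<and> k3 i = undefined \<and> k4 i = undefined" if "i \<notin> {..<n}" for i
      using that assms configs_extensional by blast
    then show ?thesis
      using \<open>X \<subseteq> {..<n}\<close> unfolding merge_def fun_eq_iff by (auto; metis DiffI)
  qed
  have "(\<Prod>i<n. of_bool (k1 i = k2 i \<and> k3 i = k4 i) + of_bool (k1 i = k4 i \<and> k3 i = k2 i) :: 'b) =
      (\<Sum>X\<in>Pow {..<n}. (\<Prod>i\<in>X. of_bool (k1 i = k2 i \<and> k3 i = k4 i)) *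
                        (\<Prod>i\<in>{..<n} - X. of_bool (k1 i = k4 i \<and> k3 i = k2 i)))"
    by (rule prod_add) simp
  also have "\<dots> = (\<Sum>X\<in>Pow {..<n}. of_bool (k2 = merge X k1 k3 \<and> k4 = merge X k3 k1))"
  proof (rule sum.cong[OF refl])
    fix X assume "X \<in> Pow {..<n}"
    then have "finite X" "X \<subseteq> {..<n}"
      by (auto intro: finite_subset)
    then show "(\<Prod>i\<in>X. of_bool (k1 i = k2 i \<and> k3 i = k4 i)) *
        (\<Prod>i\<in>{..<n} - X. of_bool (k1 i = k4 i \<and> k3 i = k2 i)) =
      (of_bool (k2 = merge X k1 k3 \<and> k4 = merge X k3 k1) :: 'b)"
      by (simp only: prod_of_bool finite_Diff finite_lessThan of_bool_conj[symmetric] exchange)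
  qed
  finally show ?thesis .
qed

lemma prob_space_PiM_haar:
  "\<forall>i<n. haar_state_measure (d i) (\<mu> i) \<Longrightarrow> prob_space (PiM {..<n} \<mu>)"
  by (rule prob_space_PiM) (auto simp: haar_state_measure_def)

lemma prod_state_monomial:
  "prod_state n \<psi>s k1 * cnj (prod_state n \<psi>s k2) * prod_state n \<psi>s k3 * cnj (prod_state n \<psi>s k4) =
    (\<Prod>i<n. \<psi>s i (k1 i) * cnj (\<psi>s i (k2 i)) * \<psi>s i (k3 i) * cnj (\<psi>s i (k4 i)))"
  by (simp add: prod_state_def prod.distrib)

lemma
  assumes haar: "\<forall>i<n. haar_state_measure (d i) (\<mu> i)"
    and k: "k1 \<in> configs {..<n} d" "k2 \<in> configs {..<n} d" "k3 \<in> configs {..<n} d" "k4 \<in> configs {..<n} d"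
  shows integrable_prod_state_monomial: "integrable (PiM {..<n} \<mu>) (\<lambda>\<psi>s.
      prod_state n \<psi>s k1 * cnj (prod_state n \<psi>s k2) * prod_state n \<psi>s k3 * cnj (prod_state n \<psi>s k4))"
    and integral_prod_state_monomial: "(LINT \<psi>s|PiM {..<n} \<mu>.
      prod_state n \<psi>s k1 * cnj (prod_state n \<psi>s k2) * prod_state n \<psi>s k3 * cnj (prod_state n \<psi>s k4)) =
    (\<Prod>i<n. 1 / (of_nat (d i) * (of_nat (d i) + 1))) *
    (\<Sum>X\<in>Pow {..<n}. of_bool (k2 = merge X k1 k3 \<and> k4 = merge X k3 k1))"
proof -
  have prob: "prob_space (\<mu> i)" if "i \<in> {..<n}" for i
    using haar that by (simp add: haar_state_measure_def)
  have moment: "integrable (\<mu> i) (\<lambda>v. v (k1 i) * cnj (v (k2 i)) * v (k3 i) * cnj (v (k4 i)))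
      \<and> fourth_moment (\<mu> i) (k1 i) (k2 i) (k3 i) (k4 i) =
        (of_bool (k1 i = k2 i \<and> k3 i = k4 i) + of_bool (k1 i = k4 i \<and> k3 i = k2 i)) /
        (of_nat (d i) * (of_nat (d i) + 1))"
    if "i \<in> {..<n}" for i
  proof -
    interpret haar_state "d i" "\<mu> i"
      using haar that by unfold_locales auto
    have "k1 i < d i" "k2 i < d i" "k3 i < d i" "k4 i < d i"
      using that k by (auto intro: configs_less)
    then show ?thesis
      by (intro conjI integrable_fourth_monomial fourth_moment_eq)
  qed
  show "integrable (PiM {..<n} \<mu>) (\<lambda>\<psi>s.
      prod_state n \<psi>s k1 * cnj (prod_state n \<psi>s k2) * prod_state n \<psi>s k3 * cnj (prod_state n \<psi>s k4))"
    unfolding prod_state_monomial using prob moment by (intro integrable_PiM_prod) auto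
  have "(LINT \<psi>s|PiM {..<n} \<mu>.
      prod_state n \<psi>s k1 * cnj (prod_state n \<psi>s k2) * prod_state n \<psi>s k3 * cnj (prod_state n \<psi>s k4)) =
      (\<Prod>i<n. fourth_moment (\<mu> i) (k1 i) (k2 i) (k3 i) (k4 i))"
    unfolding prod_state_monomial fourth_moment_def using prob moment by (intro integral_PiM_prod) auto
  also have "\<dots> = (\<Prod>i<n. 1 / (of_nat (d i) * (of_nat (d i) + 1))) *
      (\<Prod>i<n. of_bool (k1 i = k2 i \<and> k3 i = k4 i) + of_bool (k1 i = k4 i \<and> k3 i = k2 i))"
    using moment by (simp add: prod_dividef)
  finally show "(LINT \<psi>s|PiM {..<n} \<mu>.
      prod_state n \<psi>s k1 * cnj (prod_state n \<psi>s k2) * prod_state n \<psi>s k3 * cnj (prod_state n \<psi>s k4)) =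
    (\<Prod>i<n. 1 / (of_nat (d i) * (of_nat (d i) + 1))) *
    (\<Sum>X\<in>Pow {..<n}. of_bool (k2 = merge X k1 k3 \<and> k4 = merge X k3 k1))"
    unfolding prod_pairings_eq_sum_exchanges[OF k] .
qed

lemma
  fixes U :: "(nat \<Rightarrow> nat) \<Rightarrow> (nat \<Rightarrow> nat) \<Rightarrow> complex"
  assumes haar: "\<forall>i<n. haar_state_measure (d i) (\<mu> i)"
  defines "\<Phi> \<equiv> \<lambda>\<psi>s. apply_op (configs {..<n} d) U (prod_state n \<psi>s)"
  shows integrable_amplitude_product: "integrable (PiM {..<n} \<mu>) (\<lambda>\<psi>s. \<Phi> \<psi>s a * cnj (\<Phi> \<psi>s b) * \<Phi> \<psi>s c * cnj (\<Phi> \<psi>s e))"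
    and integral_amplitude_product: "(LINT \<psi>s|PiM {..<n} \<mu>. \<Phi> \<psi>s a * cnj (\<Phi> \<psi>s b) * \<Phi> \<psi>s c * cnj (\<Phi> \<psi>s e)) =
      (\<Prod>i<n. 1 / (of_nat (d i) * (of_nat (d i) + 1))) *
      (\<Sum>X\<in>Pow {..<n}. \<Sum>k1\<in>configs {..<n} d. \<Sum>k3\<in>configs {..<n} d.
         U a k1 * cnj (U b (merge X k1 k3)) * U c k3 * cnj (U e (merge X k3 k1)))"
proof -
  let ?K = "configs {..<n} d"
  let ?M = "\<lambda>k1 k2 k3 k4 \<psi>s. prod_state n \<psi>s k1 * cnj (prod_state n \<psi>s k2) *
      prod_state n \<psi>s k3 * cnj (prod_state n \<psi>s k4)"
  let ?C = "\<lambda>k1 k2 k3 k4. U a k1 * cnj (U b k2) * U c k3 * cnj (U e k4)"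
  have expand: "\<Phi> \<psi>s a * cnj (\<Phi> \<psi>s b) * \<Phi> \<psi>s c * cnj (\<Phi> \<psi>s e) =
      (\<Sum>k1\<in>?K. \<Sum>k3\<in>?K. \<Sum>k2\<in>?K. \<Sum>k4\<in>?K. ?C k1 k2 k3 k4 * ?M k1 k2 k3 k4 \<psi>s)" for \<psi>s
    unfolding \<Phi>_def apply_op_def cnj_sum sum_product4 by (simp add: mult_ac)
  show "integrable (PiM {..<n} \<mu>) (\<lambda>\<psi>s. \<Phi> \<psi>s a * cnj (\<Phi> \<psi>s b) * \<Phi> \<psi>s c * cnj (\<Phi> \<psi>s e))"
    unfolding expand
    by (intro Bochner_Integration.integrable_sum integrable_mult_right integrable_prod_state_monomial[OF haar])
  define C where "C = (\<Prod>i<n. 1 / (of_nat (d i) * (of_nat (d i) + 1)) :: complex)"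
  have "(LINT \<psi>s|PiM {..<n} \<mu>. \<Phi> \<psi>s a * cnj (\<Phi> \<psi>s b) * \<Phi> \<psi>s c * cnj (\<Phi> \<psi>s e)) =
      (\<Sum>k1\<in>?K. \<Sum>k3\<in>?K. \<Sum>k2\<in>?K. \<Sum>k4\<in>?K. ?C k1 k2 k3 k4 * (LINT \<psi>s|PiM {..<n} \<mu>. ?M k1 k2 k3 k4 \<psi>s))"
    unfolding expand by (simp add: integrable_prod_state_monomial[OF haar])
  also have "\<dots> = (\<Sum>k1\<in>?K. \<Sum>k3\<in>?K. \<Sum>k2\<in>?K. \<Sum>k4\<in>?K. ?C k1 k2 k3 k4 *
      (C * (\<Sum>X\<in>Pow {..<n}. of_bool (k2 = merge X k1 k3 \<and> k4 = merge X k3 k1))))"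
    unfolding C_def by (intro sum.cong refl) (simp add: integral_prod_state_monomial[OF haar])
  also have "\<dots> = C * (\<Sum>k1\<in>?K. \<Sum>k3\<in>?K. \<Sum>k2\<in>?K. \<Sum>k4\<in>?K. ?C k1 k2 k3 k4 *
      (\<Sum>X\<in>Pow {..<n}. of_bool (k2 = merge X k1 k3 \<and> k4 = merge X k3 k1)))"
    by (simp only: mult.left_commute[of _ C] sum_distrib_left[symmetric])
  also have "\<dots> = C * (\<Sum>X\<in>Pow {..<n}. \<Sum>k1\<in>?K. \<Sum>k3\<in>?K. ?C k1 (merge X k1 k3) k3 (merge X k3 k1))"
    by (subst sum_exchange_collapse) (auto simp: finite_configs merge_in_configs)
  finally show "(LINT \<psi>s|PiM {..<n} \<mu>. \<Phi> \<psi>s a * cnj (\<Phi> \<psi>s b) * \<Phi> \<psi>s c * cnj (\<Phi> \<psi>s e)) =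
      (\<Prod>i<n. 1 / (of_nat (d i) * (of_nat (d i) + 1))) *
      (\<Sum>X\<in>Pow {..<n}. \<Sum>k1\<in>configs {..<n} d. \<Sum>k3\<in>configs {..<n} d.
         U a k1 * cnj (U b (merge X k1 k3)) * U c k3 * cnj (U e (merge X k3 k1)))"
    unfolding C_def .
qed

lemma
  fixes U :: "(nat \<Rightarrow> nat) \<Rightarrow> (nat \<Rightarrow> nat) \<Rightarrow> complex"
  assumes haar: "\<forall>i<n. haar_state_measure (d i) (\<mu> i)" and "p \<subseteq> {..<n}"
  defines "\<Phi> \<equiv> \<lambda>\<psi>s. apply_op (configs {..<n} d) U (prod_state n \<psi>s)"
  shows integrable_purity_prod_state: "integrable (PiM {..<n} \<mu>) (\<lambda>\<psi>s. purity {..<n} d p (\<Phi> \<psi>s))"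
    and integral_purity_prod_state: "(LINT \<psi>s|PiM {..<n} \<mu>. purity {..<n} d p (\<Phi> \<psi>s)) =
      (\<Prod>i<n. 1 / (of_nat (d i) * (of_nat (d i) + 1))) *
      (\<Sum>X\<in>Pow {..<n}. exchange_sum (configs {..<n} d) U p X)"
proof -
  let ?K = "configs {..<n} d"
  let ?A = "\<lambda>g1 g2 \<psi>s. \<Phi> \<psi>s g1 * cnj (\<Phi> \<psi>s (merge p g1 g2)) * \<Phi> \<psi>s g2 * cnj (\<Phi> \<psi>s (merge p g2 g1))"
  have purity: "purity {..<n} d p (\<Phi> \<psi>s) = (\<Sum>g1\<in>?K. \<Sum>g2\<in>?K. ?A g1 g2 \<psi>s)" for \<psi>s
    using \<open>p \<subseteq> {..<n}\<close> by (intro purity_eq_sum) auto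
  have integrable: "integrable (PiM {..<n} \<mu>) (?A g1 g2)" for g1 g2
    unfolding \<Phi>_def by (rule integrable_amplitude_product[OF haar])
  then show "integrable (PiM {..<n} \<mu>) (\<lambda>\<psi>s. purity {..<n} d p (\<Phi> \<psi>s))"
    unfolding purity by (intro Bochner_Integration.integrable_sum)
  have "(LINT \<psi>s|PiM {..<n} \<mu>. purity {..<n} d p (\<Phi> \<psi>s)) =
      (\<Sum>g1\<in>?K. \<Sum>g2\<in>?K. LINT \<psi>s|PiM {..<n} \<mu>. ?A g1 g2 \<psi>s)"
    unfolding purity by (simp add: integrable)
  also have "\<dots> = (\<Sum>g1\<in>?K. \<Sum>g2\<in>?K. (\<Prod>i<n. 1 / (of_nat (d i) * (of_nat (d i) + 1))) *
      (\<Sum>X\<in>Pow {..<n}. \<Sum>k1\<in>?K. \<Sum>k2\<in>?K.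
         U g1 k1 * cnj (U (merge p g1 g2) (merge X k1 k2)) * U g2 k2 * cnj (U (merge p g2 g1) (merge X k2 k1))))"
    unfolding \<Phi>_def by (simp only: integral_amplitude_product[OF haar])
  also have "\<dots> = (\<Prod>i<n. 1 / (of_nat (d i) * (of_nat (d i) + 1))) *
      (\<Sum>X\<in>Pow {..<n}. \<Sum>g1\<in>?K. \<Sum>g2\<in>?K. \<Sum>k1\<in>?K. \<Sum>k2\<in>?K.
         U g1 k1 * cnj (U (merge p g1 g2) (merge X k1 k2)) * U g2 k2 * cnj (U (merge p g2 g1) (merge X k2 k1)))"
    by (simp only: sum_distrib_left[symmetric] sum.swap[where B = "Pow {..<n}"])
  also have "\<dots> = (\<Prod>i<n. 1 / (of_nat (d i) * (of_nat (d i) + 1))) *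
      (\<Sum>X\<in>Pow {..<n}. exchange_sum (configs {..<n} d) U p X)"
    unfolding exchange_sum_def
    by (rule arg_cong[where f = "(*) _"], rule sum.cong[OF refl], rule sum.cong[OF refl], rule sum.swap)
  finally show "(LINT \<psi>s|PiM {..<n} \<mu>. purity {..<n} d p (\<Phi> \<psi>s)) =
      (\<Prod>i<n. 1 / (of_nat (d i) * (of_nat (d i) + 1))) *
      (\<Sum>X\<in>Pow {..<n}. exchange_sum (configs {..<n} d) U p X)" .
qed

lemma prod_reciprocal_eq_prod_div_square:
  assumes "\<forall>i<n. d i \<ge> 1"
  shows "(\<Prod>i<n. 1 / (of_nat (d i) * (of_nat (d i) + 1)) :: complex) =
    (\<Prod>i<n. of_nat (d i) / (of_nat (d i) + 1)) / (of_nat (\<Prod>i<n. d i))\<^sup>2"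
proof -
  have "(\<Prod>i<n. of_nat (d i) / (of_nat (d i) + 1)) / (of_nat (\<Prod>i<n. d i))\<^sup>2 =
      (\<Prod>i<n. (of_nat (d i) / (of_nat (d i) + 1)) / (of_nat (d i))\<^sup>2 :: complex)"
  proof -
    have "(of_nat (\<Prod>i<n. d i) :: complex)\<^sup>2 = (\<Prod>i<n. (of_nat (d i))\<^sup>2)"
      by (simp add: of_nat_prod prod_power_distrib)
    then show ?thesis
      by (simp only: prod_dividef)
  qed
  also have "\<dots> = (\<Prod>i<n. 1 / (of_nat (d i) * (of_nat (d i) + 1)))"
  proof (rule prod.cong[OF refl])
    fix i assume "i \<in> {..<n}"
    then have "(of_nat (d i) :: complex) \<noteq> 0"
      using assms by auto
    moreover have "x / (x + 1) / x\<^sup>2 = 1 / (x * (x + 1))" if "x \<noteq> 0" for x :: complex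
      using that by (simp add: power2_eq_square divide_divide_eq_left)
    ultimately show "(of_nat (d i) / (of_nat (d i) + 1)) / (of_nat (d i))\<^sup>2 = 1 / (of_nat (d i) * (of_nat (d i) + 1 :: complex))"
      by blast
  qed
  finally show ?thesis ..
qed

lemma integral_purity_prod_state_eq_choi:
  assumes haar: "\<forall>i<n. haar_state_measure (d i) (\<mu> i)" and d: "\<forall>i<n. d i \<ge> 1" and p: "p \<subseteq> {..<n}"
  shows "(LINT \<psi>s|PiM {..<n} \<mu>. purity {..<n} d p (apply_op (configs {..<n} d) U (prod_state n \<psi>s))) =
    (\<Prod>i<n. of_nat (d i) / (of_nat (d i) + 1)) *
    (\<Sum>X\<in>Pow {..<n}. purity {..<2 * n} (dd n d) (p \<union> (\<lambda>i. i + n) ` X) (choi n d U))"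
proof -
  have "(\<Sum>X\<in>Pow {..<n}. purity {..<2 * n} (dd n d) (p \<union> (\<lambda>i. i + n) ` X) (choi n d U)) =
      (\<Sum>X\<in>Pow {..<n}. exchange_sum (configs {..<n} d) U p X) / (of_nat (\<Prod>i<n. d i))\<^sup>2"
    unfolding sum_divide_distrib by (intro sum.cong refl purity_choi p) auto
  then show ?thesis
    by (simp add: integral_purity_prod_state[OF haar p] prod_reciprocal_eq_prod_div_square[OF d])
qed

lemma eps_bip_eq_expected_purity:
  assumes haar: "\<forall>i<n. haar_state_measure (d i) (\<mu> i)" and p: "p \<subseteq> {..<n}"
  shows "eps_bip n d U \<mu> p =
    2 * (1 - (LINT \<psi>s|PiM {..<n} \<mu>. purity {..<n} d p (apply_op (configs {..<n} d) U (prod_state n \<psi>s))))"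
proof -
  interpret prob_space "PiM {..<n} \<mu>"
    using haar by (rule prob_space_PiM_haar)
  show ?thesis
    unfolding eps_bip_def tau_bip_def
    by (simp add: integrable_purity_prod_state[OF haar p] prob_space)
qed

theorem theorem4:
  fixes n :: nat and d :: "nat \<Rightarrow> nat"
    and U :: "(nat \<Rightarrow> nat) \<Rightarrow> (nat \<Rightarrow> nat) \<Rightarrow> complex"
    and \<mu> :: "nat \<Rightarrow> (nat \<Rightarrow> complex) measure"
  assumes "n \<ge> 2"
    and "\<forall>i<n. d i \<ge> 1"
    and "unitary_on (configs {..<n} d) U"
    and "\<forall>i<n. haar_state_measure (d i) (\<mu> i)"
  shows "eps1 n d U \<mu> = (1 / (2 ^ (n - 1) - 1)) * (\<Sum>p\<in>nontriv_bip n. eps_bip n d U \<mu> p)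
         \<and> (\<forall>p\<in>nontriv_bip n. eps_bip n d U \<mu> p =
           2 * (1 - (\<Prod>i<n. of_nat (d i) / (of_nat (d i) + 1)) *
                 (\<Sum>X\<in>Pow {..<n}. purity {..<2 * n} (dd n d) (p \<union> (\<lambda>i. i + n) ` X) (choi n d U))))"
proof -
  note haar = assms(4)
  have parties: "p \<subseteq> {..<n}" if "p \<in> nontriv_bip n" for p
    using that unfolding nontriv_bip_def by auto
  interpret prob_space "PiM {..<n} \<mu>"
    using haar by (rule prob_space_PiM_haar)
  have "integrable (PiM {..<n} \<mu>) (\<lambda>\<psi>s. tau_bip n d p (apply_op (configs {..<n} d) U (prod_state n \<psi>s)))"
    if "p \<in> nontriv_bip n" for p
    unfolding tau_bip_def using integrable_purity_prod_state[OF haar parties[OF that]] by simp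
  then have "eps1 n d U \<mu> = (1 / (2 ^ (n - 1) - 1)) * (\<Sum>p\<in>nontriv_bip n. eps_bip n d U \<mu> p)"
    unfolding eps1_def tau1_def eps_bip_def by simp
  moreover have "eps_bip n d U \<mu> p =
      2 * (1 - (\<Prod>i<n. of_nat (d i) / (of_nat (d i) + 1)) *
        (\<Sum>X\<in>Pow {..<n}. purity {..<2 * n} (dd n d) (p \<union> (\<lambda>i. i + n) ` X) (choi n d U)))"
    if "p \<in> nontriv_bip n" for p
    using eps_bip_eq_expected_purity[OF haar parties[OF that]]
      integral_purity_prod_state_eq_choi[OF haar assms(2) parties[OF that]] by simp
  ultimately show ?thesis
    by blast
qed

end
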